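(* For every problem $\alpha$ of QHC: $\neg\neg\alpha\Leftrightarrow\nabla\alpha$ holds if and only if the proposition $?\alpha$ is stable, i.e. if and only if $\neg !\neg ?\alpha\Rightarrow\, !?\alpha$.
   Context: QHC is a two-sorted first-order calculus. Its only terms are individual variables. Every formula is either a problem (denoted by Greek letters $\alpha,\beta,\gamma,\dots$) or a proposition (denoted by Latin letters $p,q,\dots$). Atomic formulas are proposition variables $p(t_1,\dots,t_n)$ (of proposition type), problem variables $\pi(t_1,\dots,t_n)$ (of problem type), and the constants $0$ (a proposition, classical falsity) and $\bot$ (a problem, intuitionistic absurdity). Propositions are closed under the classical connectives $\land,\lor,\to$ and quantifiers $\exists,\forall$; problems are closed under the intuitionistic connectives $\land,\lor,\to$ and quantifiers $\exists,\forall$ (the same symbols are used, distinguished by the type of the arguments). $\neg p$ abbreviates $p\to 0$, $\neg\alpha$ abbreviates $\alpha\to\bot$, and $\leftrightarrow$ is defined as usual. There are two type-conversion operators: if $p$ is a proposition then $!p$ is a problem, and if $\alpha$ is a problem then $?\alpha$ is a proposition. Deductive system of QHC: all axioms and rules of classical predicate logic applied to all propositions; all postulates and rules of intuitionistic predicate logic applied to all problems; the rules $p\,/\,!p$ and $\alpha\,/\,?\alpha$; and the schemas $?!p\to p$; $\alpha\to\, !?\alpha$; $!(p\to q)\to(!p\to !q)$; $?(\alpha\to\beta)\to(?\alpha\to ?\beta)$; $!0\to\bot$; $?(\alpha\land\beta)\leftrightarrow ?\alpha\land ?\beta$; $?(\alpha\lor\beta)\leftrightarrow ?\alpha\lor ?\beta$;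 $?\bot\to 0$; $?\exists x\,\alpha(x)\leftrightarrow\exists x\,?\alpha(x)$; $?\forall x\,\alpha(x)\to\forall x\,?\alpha(x)$ (usual variable side conditions implicit). $\vdash A$ means $A$ is derivable in QHC; $A\Rightarrow B$ means $\vdash A\to B$ and $A\Leftrightarrow B$ means $\vdash A\leftrightarrow B$ (with $A,B$ of the same type); $A\vdash B$ means $B$ is derivable in QHC from the premise $A$. Notation: $\Box p := ?!p$ (a proposition) and $\nabla\alpha := !?\alpha$ (a problem). QC and QH denote classical and intuitionistic predicate calculus. A proposition $p$ is stable if $\neg !\neg p\Rightarrow\, !p$. *)

theory Defs
  imports Main
begin

text \<open>Terms are only individual variables.  Propositions (type prp) and problems (type prb)
  are mutually defined; Q is the operator ?, Bang is the operator !.\<close>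

type_synonym var = nat
type_synonym name = nat

datatype prp =
    PVar name "var list"
  | PZero
  | PAnd prp prp
  | POr prp prp
  | PImp prp prp
  | PEx var prp
  | PAll var prp
  | Q prb
and prb =
    BVar name "var list"
  | BBot
  | BAnd prb prb
  | BOr prb prb
  | BImp prb prb
  | BEx var prb
  | BAll var prb
  | Bang prp

fun fvP :: "prp \<Rightarrow> var set" and fvB :: "prb \<Rightarrow> var set" where
  "fvP (PVar n ts) = set ts"
| "fvP PZero = {}"
| "fvP (PAnd a b) = fvP a \<union> fvP b"
| "fvP (POr a b) = fvP a \<union> fvP b"
| "fvP (PImp a b) = fvP a \<union> fvP b"
| "fvP (PEx x a) = fvP a - {x}"
| "fvP (PAll x a) = fvP a - {x}"
| "fvP (Q a) = fvB a"
| "fvB (BVar n ts) = set ts"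
| "fvB BBot = {}"
| "fvB (BAnd a b) = fvB a \<union> fvB b"
| "fvB (BOr a b) = fvB a \<union> fvB b"
| "fvB (BImp a b) = fvB a \<union> fvB b"
| "fvB (BEx x a) = fvB a - {x}"
| "fvB (BAll x a) = fvB a - {x}"
| "fvB (Bang a) = fvP a"

definition rn :: "var \<Rightarrow> var \<Rightarrow> var \<Rightarrow> var" where
  "rn y x z = (if z = x then y else z)"

text \<open>substP y x A: replace the free occurrences of x in A by y.\<close>
fun substP :: "var \<Rightarrow> var \<Rightarrow> prp \<Rightarrow> prp" and substB :: "var \<Rightarrow> var \<Rightarrow> prb \<Rightarrow> prb" where
  "substP y x (PVar n ts) = PVar n (map (rn y x) ts)"
| "substP y x PZero = PZero"
| "substP y x (PAnd a b) = PAnd (substP y x a) (substP y x b)"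
| "substP y x (POr a b) = POr (substP y x a) (substP y x b)"
| "substP y x (PImp a b) = PImp (substP y x a) (substP y x b)"
| "substP y x (PEx z a) = (if z = x then PEx z a else PEx z (substP y x a))"
| "substP y x (PAll z a) = (if z = x then PAll z a else PAll z (substP y x a))"
| "substP y x (Q a) = Q (substB y x a)"
| "substB y x (BVar n ts) = BVar n (map (rn y x) ts)"
| "substB y x BBot = BBot"
| "substB y x (BAnd a b) = BAnd (substB y x a) (substB y x b)"
| "substB y x (BOr a b) = BOr (substB y x a) (substB y x b)"
| "substB y x (BImp a b) = BImp (substB y x a) (substB y x b)"
| "substB y x (BEx z a) = (if z = x then BEx z a else BEx z (substB y x a))"
| "substB y x (BAll z a) = (if z = x then BAll z a else BAll z (substB y x a))"
| "substB y x (Bang a) = Bang (substP y x a)"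

text \<open>freeforP y x A: y is free for x in A (no free occurrence of x in A lies in the
  scope of a quantifier binding y).\<close>
fun freeforP :: "var \<Rightarrow> var \<Rightarrow> prp \<Rightarrow> bool" and freeforB :: "var \<Rightarrow> var \<Rightarrow> prb \<Rightarrow> bool" where
  "freeforP y x (PVar n ts) = True"
| "freeforP y x PZero = True"
| "freeforP y x (PAnd a b) = (freeforP y x a \<and> freeforP y x b)"
| "freeforP y x (POr a b) = (freeforP y x a \<and> freeforP y x b)"
| "freeforP y x (PImp a b) = (freeforP y x a \<and> freeforP y x b)"
| "freeforP y x (PEx z a) = (z = x \<or> ((z \<noteq> y \<or> x \<notin> fvP a) \<and> freeforP y x a))"
| "freeforP y x (PAll z a) = (z = x \<or> ((z \<noteq> y \<or> x \<notin> fvP a) \<and> freeforP y x a))"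
| "freeforP y x (Q a) = freeforB y x a"
| "freeforB y x (BVar n ts) = True"
| "freeforB y x BBot = True"
| "freeforB y x (BAnd a b) = (freeforB y x a \<and> freeforB y x b)"
| "freeforB y x (BOr a b) = (freeforB y x a \<and> freeforB y x b)"
| "freeforB y x (BImp a b) = (freeforB y x a \<and> freeforB y x b)"
| "freeforB y x (BEx z a) = (z = x \<or> ((z \<noteq> y \<or> x \<notin> fvB a) \<and> freeforB y x a))"
| "freeforB y x (BAll z a) = (z = x \<or> ((z \<noteq> y \<or> x \<notin> fvB a) \<and> freeforB y x a))"
| "freeforB y x (Bang a) = freeforP y x a"

definition PNeg :: "prp \<Rightarrow> prp" where "PNeg p = PImp p PZero"
definition BNeg :: "prb \<Rightarrow> prb" where "BNeg a = BImp a BBot"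
definition PIff :: "prp \<Rightarrow> prp \<Rightarrow> prp" where "PIff p q = PAnd (PImp p q) (PImp q p)"
definition BIff :: "prb \<Rightarrow> prb \<Rightarrow> prb" where "BIff a b = BAnd (BImp a b) (BImp b a)"
definition Box :: "prp \<Rightarrow> prp" where "Box p = Q (Bang p)"
definition Nabla :: "prb \<Rightarrow> prb" where "Nabla a = Bang (Q a)"

inductive dP :: "prp \<Rightarrow> bool" and dB :: "prb \<Rightarrow> bool" where
  P_K: "dP (PImp p (PImp q p))"
| P_S: "dP (PImp (PImp p (PImp q r)) (PImp (PImp p q) (PImp p r)))"
| P_AndE1: "dP (PImp (PAnd p q) p)"
| P_AndE2: "dP (PImp (PAnd p q) q)"
| P_AndI: "dP (PImp p (PImp q (PAnd p q)))"
| P_OrI1: "dP (PImp p (POr p q))"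
| P_OrI2: "dP (PImp q (POr p q))"
| P_OrE: "dP (PImp (PImp p r) (PImp (PImp q r) (PImp (POr p q) r)))"
| P_Efq: "dP (PImp PZero p)"
| P_DNE: "dP (PImp (PImp (PImp p PZero) PZero) p)"
| P_AllE: "freeforP y x p \<Longrightarrow> dP (PImp (PAll x p) (substP y x p))"
| P_ExI: "freeforP y x p \<Longrightarrow> dP (PImp (substP y x p) (PEx x p))"
| P_MP: "dP (PImp p q) \<Longrightarrow> dP p \<Longrightarrow> dP q"
| P_AllI: "dP (PImp r p) \<Longrightarrow> x \<notin> fvP r \<Longrightarrow> dP (PImp r (PAll x p))"
| P_ExE: "dP (PImp p r) \<Longrightarrow> x \<notin> fvP r \<Longrightarrow> dP (PImp (PEx x p) r)"
| B_K: "dB (BImp a (BImp b a))"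
| B_S: "dB (BImp (BImp a (BImp b c)) (BImp (BImp a b) (BImp a c)))"
| B_AndE1: "dB (BImp (BAnd a b) a)"
| B_AndE2: "dB (BImp (BAnd a b) b)"
| B_AndI: "dB (BImp a (BImp b (BAnd a b)))"
| B_OrI1: "dB (BImp a (BOr a b))"
| B_OrI2: "dB (BImp b (BOr a b))"
| B_OrE: "dB (BImp (BImp a c) (BImp (BImp b c) (BImp (BOr a b) c)))"
| B_Efq: "dB (BImp BBot a)"
| B_AllE: "freeforB y x a \<Longrightarrow> dB (BImp (BAll x a) (substB y x a))"
| B_ExI: "freeforB y x a \<Longrightarrow> dB (BImp (substB y x a) (BEx x a))"
| B_MP: "dB (BImp a b) \<Longrightarrow> dB a \<Longrightarrow> dB b"
| B_AllI: "dB (BImp c a) \<Longrightarrow> x \<notin> fvB c \<Longrightarrow> dB (BImp c (BAll x a))"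
| B_ExE: "dB (BImp a c) \<Longrightarrow> x \<notin> fvB c \<Longrightarrow> dB (BImp (BEx x a) c)"
| R_Bang: "dP p \<Longrightarrow> dB (Bang p)"
| R_Q: "dB a \<Longrightarrow> dP (Q a)"
| A1: "dP (PImp (Q (Bang p)) p)"
| A2: "dB (BImp a (Bang (Q a)))"
| A3: "dB (BImp (Bang (PImp p q)) (BImp (Bang p) (Bang q)))"
| A4: "dP (PImp (Q (BImp a b)) (PImp (Q a) (Q b)))"
| A5: "dB (BImp (Bang PZero) BBot)"
| A6: "dP (PIff (Q (BAnd a b)) (PAnd (Q a) (Q b)))"
| A7: "dP (PIff (Q (BOr a b)) (POr (Q a) (Q b)))"
| A8: "dP (PImp (Q BBot) PZero)"
| A9: "dP (PIff (Q (BEx x a)) (PEx x (Q a)))"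
| A10: "dP (PImp (Q (BAll x a)) (PAll x (Q a)))"

definition stable :: "prp \<Rightarrow> bool" where
  "stable p \<longleftrightarrow> dB (BImp (BNeg (Bang (PNeg p))) (Bang p))"

end

theory Submission
  imports Defs
begin

(* The key fact is that negation commutes with the conversions:
   for every problem a,   not a  <=>  ! not ?a   (lemma neg_equiv_bang_neg_query).
   "=>" uses  a -> !?a  and  ?(a -> bot) -> (?a -> 0),  "<=" uses  !(p -> 0) -> (!p -> bot).
   Contraposing gives  not not a  <=>  not ! not ?a,  and from "=>" one also gets
   nabla a => not not a  for every problem.  Hence  not not a <=> nabla a  holds iff
   not not a => nabla a, iff  not ! not ?a => !?a, which is stability of ?a. *)

lemma B_refl: "dB (BImp a a)"
  by (meson B_K B_S B_MP)

lemma B_trans: "dB (BImp a b) \<Longrightarrow> dB (BImp b c) \<Longrightarrow> dB (BImp a c)"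
  by (meson B_K B_S B_MP)

lemma B_postcomp: "dB (BImp b c) \<Longrightarrow> dB (BImp (BImp a b) (BImp a c))"
  by (meson B_K B_S B_MP)

lemma B_exchange:
  assumes "dB (BImp a (BImp b c))"
  shows "dB (BImp b (BImp a c))"
proof -
  have "dB (BImp (BImp a b) (BImp a c))"
    using assms B_S B_MP by blast
  then show ?thesis
    using B_trans B_K by blast
qed

lemma B_contrapose:
  assumes "dB (BImp a b)"
  shows "dB (BImp (BImp b d) (BImp a d))"
proof -
  have "dB (BImp b (BImp (BImp b d) d))"
    using B_exchange B_refl by blast
  then show ?thesis
    using B_exchange B_trans assms by blast
qed

lemma B_neg_contrapose: "dB (BImp a b) \<Longrightarrow> dB (BImp (BNeg b) (BNeg a))"
  unfolding BNeg_def by (rule B_contrapose)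

lemma dB_BIff: "dB (BIff a b) \<longleftrightarrow> dB (BImp a b) \<and> dB (BImp b a)"
  unfolding BIff_def by (meson B_AndE1 B_AndE2 B_AndI B_MP)

lemma P_trans: "dP (PImp a b) \<Longrightarrow> dP (PImp b c) \<Longrightarrow> dP (PImp a c)"
  by (meson P_K P_S P_MP)

lemma P_postcomp: "dP (PImp b c) \<Longrightarrow> dP (PImp (PImp a b) (PImp a c))"
  by (meson P_K P_S P_MP)

lemma Bang_mono: "dP (PImp p q) \<Longrightarrow> dB (BImp (Bang p) (Bang q))"
  using R_Bang A3 B_MP by blast

text \<open>?(not a) implies not ?a, combining the ?-distribution axiom with ?bot -> 0.\<close>
lemma Q_neg: "dP (PImp (Q (BNeg a)) (PNeg (Q a)))"
  unfolding BNeg_def PNeg_def using P_trans[OF A4 P_postcomp[OF A8]] .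

text \<open>! (not p) implies not !p, combining ! distribution with !0 -> bot.\<close>
lemma Bang_neg: "dB (BImp (Bang (PNeg p)) (BNeg (Bang p)))"
  unfolding BNeg_def PNeg_def using B_trans[OF A3 B_postcomp[OF A5]] .

lemma neg_imp_bang_neg_query: "dB (BImp (BNeg a) (Bang (PNeg (Q a))))"
  using B_trans[OF A2 Bang_mono[OF Q_neg]] .

lemma bang_neg_query_imp_neg: "dB (BImp (Bang (PNeg (Q a))) (BNeg a))"
  using B_trans[OF Bang_neg B_neg_contrapose[OF A2]] .

lemma double_neg_equiv:
  "dB (BIff (BNeg (BNeg a)) (BNeg (Bang (PNeg (Q a)))))"
  unfolding dB_BIff
  using B_neg_contrapose[OF neg_imp_bang_neg_query]
        B_neg_contrapose[OF bang_neg_query_imp_neg] by blast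

text \<open>nabla a always implies not not a, so only the converse is at stake.\<close>
lemma nabla_imp_double_neg: "dB (BImp (Nabla a) (BNeg (BNeg a)))"
proof -
  have "dB (BImp (BNeg a) (BNeg (Bang (Q a))))"
    using B_trans[OF neg_imp_bang_neg_query Bang_neg] .
  then show ?thesis
    unfolding Nabla_def BNeg_def by (rule B_exchange)
qed

lemma imp_congr_hyp:
  assumes "dB (BIff a a')"
  shows "dB (BImp a c) \<longleftrightarrow> dB (BImp a' c)"
  using assms unfolding dB_BIff by (meson B_trans)

theorem proposition2p21:
  fixes \<alpha> :: prb
  shows "dB (BIff (BNeg (BNeg \<alpha>)) (Nabla \<alpha>)) \<longleftrightarrow> stable (Q \<alpha>)"
proof -
  have "dB (BIff (BNeg (BNeg \<alpha>)) (Nabla \<alpha>)) \<longleftrightarrow> dB (BImp (BNeg (BNeg \<alpha>)) (Nabla \<alpha>))"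
    using dB_BIff nabla_imp_double_neg by blast
  also have "\<dots> \<longleftrightarrow> dB (BImp (BNeg (Bang (PNeg (Q \<alpha>)))) (Nabla \<alpha>))"
    using imp_congr_hyp[OF double_neg_equiv] .
  also have "\<dots> \<longleftrightarrow> stable (Q \<alpha>)"
    unfolding stable_def Nabla_def ..
  finally show ?thesis .
qed

end
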